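(* For any $a,b>0$, the restriction of $J$ to $\mathcal P_{(a,b)}$ is coercive, i.e. $J(u,v)\to+\infty$ whenever $(u,v)\in\mathcal P_{(a,b)}$ and $\|(u,v)\|_{\mathbb D}\to\infty$.
   Context: Standing assumptions: $s\in(\tfrac12,1)$, $\mu_1,\mu_2,\beta>0$, $r_1,r_2>1$, $\frac{2(1+3s)}{1+s}<p,q,r_1+r_2<2_s=\frac{2(1+s)}{1-s}$. $\mathcal H^{1,s}(\mathbb R^2)$: $u\in L^2(\mathbb R^2)$ with $\partial_xu,(-\Delta)_y^{s/2}u\in L^2$ ($(-\Delta)_y^{s/2}$ the fractional Laplacian in $y$ only), norm $\|u\|^2=\|u\|_2^2+\|\partial_xu\|_2^2+\|(-\Delta)_y^{s/2}u\|_2^2$; $\mathbb D=\mathcal H^{1,s}\times\mathcal H^{1,s}$ with $\|(u,v)\|_{\mathbb D}^2=\|u\|^2+\|v\|^2$; $K(u)=\int(|\partial_xu|^2+|(-\Delta)_y^{s/2}u|^2)$. $J(u,v)=\tfrac12K(u)+\tfrac12K(v)-\frac{\mu_1}{p}\|u\|_p^p-\frac{\mu_2}{q}\|v\|_q^q-\beta\int|u|^{r_1}|v|^{r_2}$; $P(u,v)=sK(u)+sK(v)-\frac{(1+s)(p-2)}{2p}\mu_1\|u\|_p^p-\frac{(1+s)(q-2)}{2q}\mu_2\|v\|_q^q-\frac{(1+s)(r_1+r_2-2)}{2}\beta\int|u|^{r_1}|v|^{r_2}$; $\mathcal P=\{(u,v)\ne(0,0):P(u,v)=0\}$; $D_a=\{u:\|u\|_2^2\le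 a\}$; $\mathcal P_{(a,b)}=\mathcal P\cap(D_a\times D_b)$. *)

theory Defs
  imports "HOL-Analysis.Analysis"
begin

type_synonym fn2 = "real \<times> real \<Rightarrow> real"

definition test_fun :: "fn2 \<Rightarrow> bool" where
  "test_fun \<phi> \<longleftrightarrow> (\<exists>D. (\<forall>z. (\<phi> has_derivative D z) (at z))
      \<and> continuous_on UNIV (\<lambda>z. D z (1,0)) \<and> continuous_on UNIV (\<lambda>z. D z (0,1)))
    \<and> bounded {z. \<phi> z \<noteq> 0}"

definition pdx :: "fn2 \<Rightarrow> fn2" where
  "pdx \<phi> z = deriv (\<lambda>t. \<phi> (t, snd z)) (fst z)"

definition weak_dx :: "fn2 \<Rightarrow> fn2 \<Rightarrow> bool" where
  "weak_dx u g \<longleftrightarrow> (\<forall>\<phi>. test_fun \<phi> \<longrightarrow>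
     lebesgue_integral lborel (\<lambda>z. u z * pdx \<phi> z) = - lebesgue_integral lborel (\<lambda>z. g z * \<phi> z))"

definition dx :: "fn2 \<Rightarrow> fn2" where
  "dx u = (SOME g. g \<in> borel_measurable lborel \<and> integrable lborel (\<lambda>z. (g z)\<^sup>2) \<and> weak_dx u g)"

text \<open>Normalising constant C(1,s) of the one-dimensional fractional Laplacian
  (Di Nezza--Palatucci--Valdinoci): C(1,s) = (\<integral>_R (1 - cos t)/|t|^(1+2s) dt)^(-1).\<close>
definition frac_const :: "real \<Rightarrow> real" where
  "frac_const s = 1 / (lebesgue_integral lborel (\<lambda>t. (1 - cos t) / abs t powr (1 + 2 * s)))"

definition gagliardo_y :: "real \<Rightarrow> fn2 \<Rightarrow> ennreal" where
  "gagliardo_y s u = nn_integral lborel (\<lambda>x. nn_integral lborel (\<lambda>y. nn_integral lborel (\<lambda>y'.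
       ennreal ((u (x,y) - u (x,y'))\<^sup>2 / abs (y - y') powr (1 + 2 * s)))))"

text \<open>\<parallel>(-\<Delta>)_y^(s/2) u\<parallel>_2^2 = C(1,s)/2 * [u]^2 (Fourier/singular-integral equivalence, per x-slice).\<close>
definition fraclap_sq :: "real \<Rightarrow> fn2 \<Rightarrow> real" where
  "fraclap_sq s u = frac_const s / 2 * enn2real (gagliardo_y s u)"

definition L2sq :: "fn2 \<Rightarrow> real" where
  "L2sq u = lebesgue_integral lborel (\<lambda>z. (u z)\<^sup>2)"

definition Lp_pow :: "real \<Rightarrow> fn2 \<Rightarrow> real" where
  "Lp_pow p u = lebesgue_integral lborel (\<lambda>z. \<bar>u z\<bar> powr p)"

definition H1s :: "real \<Rightarrow> fn2 set" where
  "H1s s = {u. u \<in> borel_measurable lborel \<and> integrable lborel (\<lambda>z. (u z)\<^sup>2)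
      \<and> (\<exists>g. g \<in> borel_measurable lborel \<and> integrable lborel (\<lambda>z. (g z)\<^sup>2) \<and> weak_dx u g)
      \<and> gagliardo_y s u < \<infinity>}"

definition Kf :: "real \<Rightarrow> fn2 \<Rightarrow> real" where
  "Kf s u = L2sq (dx u) + fraclap_sq s u"

definition Hnorm :: "real \<Rightarrow> fn2 \<Rightarrow> real" where
  "Hnorm s u = sqrt (L2sq u + Kf s u)"

definition Dnorm :: "real \<Rightarrow> fn2 \<times> fn2 \<Rightarrow> real" where
  "Dnorm s w = sqrt ((Hnorm s (fst w))\<^sup>2 + (Hnorm s (snd w))\<^sup>2)"

definition coupling :: "real \<Rightarrow> real \<Rightarrow> fn2 \<Rightarrow> fn2 \<Rightarrow> real" where
  "coupling r1 r2 u v = lebesgue_integral lborel (\<lambda>z. \<bar>u z\<bar> powr r1 * \<bar>v z\<bar> powr r2)"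

definition Jf :: "real \<Rightarrow> real \<Rightarrow> real \<Rightarrow> real \<Rightarrow> real \<Rightarrow> real \<Rightarrow> real \<Rightarrow> real \<Rightarrow> 
    fn2 \<times> fn2 \<Rightarrow> real" where
  "Jf s \<mu>1 \<mu>2 \<beta> p q r1 r2 w =
     Kf s (fst w) / 2 + Kf s (snd w) / 2 - \<mu>1 / p * Lp_pow p (fst w) - \<mu>2 / q * Lp_pow q (snd w)
     - \<beta> * coupling r1 r2 (fst w) (snd w)"

definition Pf :: "real \<Rightarrow> real \<Rightarrow> real \<Rightarrow> real \<Rightarrow> real \<Rightarrow> real \<Rightarrow> real \<Rightarrow> real \<Rightarrow> 
    fn2 \<times> fn2 \<Rightarrow> real" where
  "Pf s \<mu>1 \<mu>2 \<beta> p q r1 r2 w =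
     s * Kf s (fst w) + s * Kf s (snd w)
     - (1 + s) * (p - 2) / (2 * p) * \<mu>1 * Lp_pow p (fst w)
     - (1 + s) * (q - 2) / (2 * q) * \<mu>2 * Lp_pow q (snd w)
     - (1 + s) * (r1 + r2 - 2) / 2 * \<beta> * coupling r1 r2 (fst w) (snd w)"

definition Pab :: "real \<Rightarrow> real \<Rightarrow> real \<Rightarrow> real \<Rightarrow> real \<Rightarrow> real \<Rightarrow> real \<Rightarrow> real \<Rightarrow> real
    \<Rightarrow> real \<Rightarrow> (fn2 \<times> fn2) set" where
  "Pab s \<mu>1 \<mu>2 \<beta> p q r1 r2 a b =
     {w. fst w \<in> H1s s \<and> snd w \<in> H1s s
       \<and> \<not> ((AE z in lborel. fst w z = 0) \<and> (AE z in lborel. snd w z = 0))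
       \<and> Pf s \<mu>1 \<mu>2 \<beta> p q r1 r2 w = 0
       \<and> L2sq (fst w) \<le> a \<and> L2sq (snd w) \<le> b}"

end

theory Submission
  imports Defs
begin

text \<open>On the Pohozaev set one may subtract \<open>t \<cdot> P = 0\<close> from \<open>J\<close>. Since every nonlinear exponent
  exceeds the mass-supercritical threshold \<open>2(1+3s)/(1+s)\<close>, there is a \<open>t > 0\<close> for which all
  nonlinear terms of \<open>J - t P\<close> are nonnegative while the kinetic term keeps a positive
  coefficient \<open>c\<close>. Hence \<open>J \<ge> c (K(u) + K(v))\<close> on \<open>\<P>\<close>, and on \<open>D\<^sub>a \<times> D\<^sub>b\<close> the kinetic energy
  \<open>K(u) + K(v) \<ge> \<parallel>(u,v)\<parallel>\<^sup>2 - a - b\<close> controls the norm.\<close>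

lemma Lp_pow_nonneg: "0 \<le> Lp_pow p u"
  unfolding Lp_pow_def by (rule integral_nonneg_AE) auto

lemma coupling_nonneg: "0 \<le> coupling r1 r2 u v"
  unfolding coupling_def by (rule integral_nonneg_AE) auto

lemma L2sq_nonneg: "0 \<le> L2sq u"
  unfolding L2sq_def by (rule integral_nonneg_AE) auto

lemma frac_const_nonneg: "0 \<le> frac_const s"
proof -
  have "0 \<le> lebesgue_integral lborel (\<lambda>t::real. (1 - cos t) / \<bar>t\<bar> powr (1 + 2 * s))"
    by (rule integral_nonneg_AE) auto
  then show ?thesis unfolding frac_const_def by simp
qed

lemma Kf_nonneg: "0 \<le> Kf s u"
  unfolding Kf_def fraclap_sq_def using L2sq_nonneg[of "dx u"] frac_const_nonneg[of s]
  by simp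

lemma power2_Dnorm:
  "(Dnorm s w)\<^sup>2 = L2sq (fst w) + Kf s (fst w) + L2sq (snd w) + Kf s (snd w)"
  unfolding Dnorm_def Hnorm_def
  using L2sq_nonneg[of "fst w"] L2sq_nonneg[of "snd w"] Kf_nonneg[of s "fst w"] Kf_nonneg[of s "snd w"]
  by simp

lemma mass_supercritical_gap:
  fixes s x :: real
  assumes "-1 < s" and "2 * (1 + 3 * s) / (1 + s) < x"
  shows "4 * s < (1 + s) * (x - 2)"
proof -
  have "2 * (1 + 3 * s) < x * (1 + s)"
    using assms by (simp add: field_simps)
  then show ?thesis by (simp add: algebra_simps)
qed

lemma Jf_ge_Kf_if_Pf_zero:
  fixes s \<gamma> :: real
  assumes s: "-1 < s" and \<gamma>: "2 < \<gamma>" "\<gamma> \<le> p" "\<gamma> \<le> q" "\<gamma> \<le> r1 + r2"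
    and coeffs: "0 \<le> \<mu>1" "0 \<le> \<mu>2" "0 \<le> \<beta>"
    and P: "Pf s \<mu>1 \<mu>2 \<beta> p q r1 r2 w = 0"
  shows "(1/2 - 2 * s / ((1 + s) * (\<gamma> - 2))) * (Kf s (fst w) + Kf s (snd w))
           \<le> Jf s \<mu>1 \<mu>2 \<beta> p q r1 r2 w"
proof -
  define t where "t = 2 / ((1 + s) * (\<gamma> - 2))"
  have t_pos: "0 < t" unfolding t_def using s \<gamma> by simp
  have excess_nonneg: "0 \<le> t * (1 + s) * (x - 2) - 2" if "\<gamma> \<le> x" for x
  proof -
    have "t * ((1 + s) * (\<gamma> - 2)) \<le> t * ((1 + s) * (x - 2))"
      using that t_pos s by (intro mult_left_mono) auto
    moreover have "t * ((1 + s) * (\<gamma> - 2)) = 2" unfolding t_def using s \<gamma> by simp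
    ultimately show ?thesis by (simp add: algebra_simps)
  qed
  define K where "K = Kf s (fst w) + Kf s (snd w)"
  define A where "A = Lp_pow p (fst w)"
  define B where "B = Lp_pow q (snd w)"
  define C where "C = coupling r1 r2 (fst w) (snd w)"
  have J: "Jf s \<mu>1 \<mu>2 \<beta> p q r1 r2 w = K / 2 - \<mu>1 / p * A - \<mu>2 / q * B - \<beta> * C"
    unfolding Jf_def K_def A_def B_def C_def by simp
  have P0: "s * K - (1 + s) * (p - 2) / (2 * p) * \<mu>1 * A - (1 + s) * (q - 2) / (2 * q) * \<mu>2 * B
      - (1 + s) * (r1 + r2 - 2) / 2 * \<beta> * C = 0"
    using P unfolding Pf_def K_def A_def B_def C_def by (simp add: algebra_simps)
  moreover have "0 \<le> (t * (1 + s) * (p - 2) - 2) / (2 * p) * \<mu>1 * A"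
    using excess_nonneg[of p] \<gamma> coeffs Lp_pow_nonneg unfolding A_def by simp
  moreover have "0 \<le> (t * (1 + s) * (q - 2) - 2) / (2 * q) * \<mu>2 * B"
    using excess_nonneg[of q] \<gamma> coeffs Lp_pow_nonneg unfolding B_def by simp
  moreover have "0 \<le> (t * (1 + s) * (r1 + r2 - 2) - 2) / 2 * \<beta> * C"
    using excess_nonneg[of "r1 + r2"] \<gamma> coeffs coupling_nonneg unfolding C_def by simp
  moreover have "K / 2 - \<mu>1 / p * A - \<mu>2 / q * B - \<beta> * C
      = (1/2 - t * s) * K
        + (t * (1 + s) * (p - 2) - 2) / (2 * p) * \<mu>1 * A
        + (t * (1 + s) * (q - 2) - 2) / (2 * q) * \<mu>2 * B
        + (t * (1 + s) * (r1 + r2 - 2) - 2) / 2 * \<beta> * C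
        + t * (s * K - (1 + s) * (p - 2) / (2 * p) * \<mu>1 * A - (1 + s) * (q - 2) / (2 * q) * \<mu>2 * B
             - (1 + s) * (r1 + r2 - 2) / 2 * \<beta> * C)"
    using \<gamma> by (simp add: field_simps)
  ultimately have "(1/2 - t * s) * K \<le> Jf s \<mu>1 \<mu>2 \<beta> p q r1 r2 w"
    unfolding J P0 by linarith
  then show ?thesis unfolding t_def K_def by (simp add: mult.commute)
qed
theorem corollary3p6:
  fixes s \<mu>1 \<mu>2 \<beta> p q r1 r2 a b :: real
    and U :: "nat \<Rightarrow> fn2 \<times> fn2"
  assumes "1/2 < s" "s < 1"
    and "\<mu>1 > 0" "\<mu>2 > 0" "\<beta> > 0" "r1 > 1" "r2 > 1"
    and "2 * (1+3 * s)/(1+s) < p" "p < 2 * (1+s)/(1-s)"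
    and "2 * (1+3 * s)/(1+s) < q" "q < 2 * (1+s)/(1-s)"
    and "2 * (1+3 * s)/(1+s) < r1 + r2" "r1 + r2 < 2 * (1+s)/(1-s)"
    and "a > 0" "b > 0"
    and "\<forall>n. U n \<in> Pab s \<mu>1 \<mu>2 \<beta> p q r1 r2 a b"
    and "filterlim (\<lambda>n. Dnorm s (U n)) at_top sequentially"
  shows "filterlim (\<lambda>n. Jf s \<mu>1 \<mu>2 \<beta> p q r1 r2 (U n)) at_top sequentially"
proof -
  define \<gamma> where "\<gamma> = min p (min q (r1 + r2))"
  have \<gamma>_le: "\<gamma> \<le> p" "\<gamma> \<le> q" "\<gamma> \<le> r1 + r2"
    unfolding \<gamma>_def by auto
  have "2 * (1 + 3 * s) / (1 + s) < \<gamma>"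
    unfolding \<gamma>_def using assms(8,10,12) by simp
  then have gap: "4 * s < (1 + s) * (\<gamma> - 2)"
    using mass_supercritical_gap assms(1) by simp
  have "2 < \<gamma>"
  proof (rule ccontr)
    assume "\<not> 2 < \<gamma>"
    then have "(1 + s) * (\<gamma> - 2) \<le> 0"
      using assms(1) by (intro mult_nonneg_nonpos) auto
    then show False using gap assms(1) by simp
  qed
  define c where "c = 1/2 - 2 * s / ((1 + s) * (\<gamma> - 2))"
  have c_pos: "0 < c"
    unfolding c_def using gap \<open>2 < \<gamma>\<close> assms(1) by (simp add: field_simps)
  have bound: "c * (- (a + b) + (Dnorm s (U n))\<^sup>2) \<le> Jf s \<mu>1 \<mu>2 \<beta> p q r1 r2 (U n)" for n
  proof -
    have Un: "Pf s \<mu>1 \<mu>2 \<beta> p q r1 r2 (U n) = 0" "L2sq (fst (U n)) \<le> a" "L2sq (snd (U n)) \<le> b"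
      using assms(16) unfolding Pab_def by auto
    then have "- (a + b) + (Dnorm s (U n))\<^sup>2 \<le> Kf s (fst (U n)) + Kf s (snd (U n))"
      using power2_Dnorm[of s "U n"] by linarith
    then have "c * (- (a + b) + (Dnorm s (U n))\<^sup>2) \<le> c * (Kf s (fst (U n)) + Kf s (snd (U n)))"
      using c_pos by (intro mult_left_mono) auto
    also have "\<dots> \<le> Jf s \<mu>1 \<mu>2 \<beta> p q r1 r2 (U n)"
      unfolding c_def using Jf_ge_Kf_if_Pf_zero[OF _ \<open>2 < \<gamma>\<close> \<gamma>_le _ _ _ Un(1)] assms(1,3-5)
      by simp
    finally show ?thesis .
  qed
  have "filterlim (\<lambda>n. c * (- (a + b) + (Dnorm s (U n))\<^sup>2)) at_top sequentially"
    by (intro filterlim_tendsto_pos_mult_at_top[OF tendsto_const c_pos]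
        filterlim_tendsto_add_at_top[OF tendsto_const] filterlim_pow_at_top[OF _ assms(17)]) simp
  then show ?thesis
    using bound by (rule filterlim_at_top_mono[OF _ always_eventually[OF allI]])
qed

end
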